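(* Let $\mathbb{A}$ be the Rado graph and $\mathbb{F}$ any field. For a finite set $S\subseteq\mathbb{A}$ let $f_S:\mathbb{A}\to\mathbb{F}$ be the indicator function of the set of vertices adjacent to every vertex of $S$, and let $V$ be the linear span of $\{f_S : S\subseteq\mathbb{A}\text{ finite}\}$. Then $V$ is not orbit-finitely spanned; consequently the space of finitely supported functions $\mathbb{A}\to\mathbb{F}$ (equivalently, the space of finitely supported linear maps $\operatorname{Lin}_{\mathbb{F}}\mathbb{A}\to\mathbb{F}$) is not orbit-finitely spanned.
   Context: The Rado graph is the Fraïssé limit of all finite undirected graphs (the countable homogeneous graph into which every finite graph embeds), with automorphism group $\operatorname{Aut}(\mathbb{A})$. $\operatorname{Aut}(\mathbb{A})$ acts on functions $f:\mathbb{A}\to\mathbb{F}$ by $(\pi f)(a)=f(\pi^{-1}a)$; a function is finitely supported if there is a finite $T\subseteq\mathbb{A}$ such that every automorphism fixing $T$ pointwise fixes $f$. A vector space with a linear $\operatorname{Aut}(\mathbb{A})$-action in which every vector is finitely supported is orbit-finitely spanned if it is spanned by an $\operatorname{Aut}(\mathbb{A})$-invariant subset with finitely many orbits (each of whose elements is finitely supported). *)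

theory Defs
  imports Complex_Main "HOL-Library.Countable_Set" "HOL-Library.Function_Algebras"
begin

text \<open>It is unique up to isomorphism, so we quantify over
all graphs on a vertex type satisfying these properties.\<close>

definition is_rado :: "('a \<Rightarrow> 'a \<Rightarrow> bool) \<Rightarrow> bool" where
  "is_rado E \<longleftrightarrow> countable (UNIV :: 'a set)
     \<and> (\<forall>x y. E x y \<longrightarrow> E y x) \<and> (\<forall>x. \<not> E x x)
     \<and> (\<forall>U W. finite U \<and> finite W \<and> U \<inter> W = {} \<longrightarrow>
          (\<exists>z. z \<notin> U \<and> z \<notin> W \<and> (\<forall>u\<in>U. E z u) \<and> (\<forall>w\<in>W. \<not> E z w)))"

definition Aut :: "('a \<Rightarrow> 'a \<Rightarrow> bool) \<Rightarrow> ('a \<Rightarrow> 'a) set" where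
  "Aut E = {\<pi>. bij \<pi> \<and> (\<forall>x y. E x y \<longleftrightarrow> E (\<pi> x) (\<pi> y))}"

definition act :: "('a \<Rightarrow> 'a) \<Rightarrow> ('a \<Rightarrow> 'k) \<Rightarrow> ('a \<Rightarrow> 'k)" where
  "act \<pi> f = (\<lambda>a. f (inv \<pi> a))"

definition fin_supp :: "('a \<Rightarrow> 'a \<Rightarrow> bool) \<Rightarrow> ('a \<Rightarrow> 'k) \<Rightarrow> bool" where
  "fin_supp E f \<longleftrightarrow> (\<exists>T. finite T \<and>
     (\<forall>\<pi>\<in>Aut E. (\<forall>t\<in>T. \<pi> t = t) \<longrightarrow> act \<pi> f = f))"

definition fspan :: "('a \<Rightarrow> 'k::field) set \<Rightarrow> ('a \<Rightarrow> 'k) set" where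
  "fspan X = module.span (\<lambda>c f x. c * f x) X"

definition orbit_finitely_spanned ::
  "('a \<Rightarrow> 'a \<Rightarrow> bool) \<Rightarrow> ('a \<Rightarrow> 'k::field) set \<Rightarrow> bool" where
  "orbit_finitely_spanned E V \<longleftrightarrow> (\<exists>X. X \<subseteq> V \<and> fspan X = V
     \<and> (\<forall>\<pi>\<in>Aut E. \<forall>f\<in>X. act \<pi> f \<in> X)
     \<and> (\<forall>f\<in>X. fin_supp E f)
     \<and> (\<exists>G. finite G \<and> G \<subseteq> X \<and> X = {act \<pi> g | \<pi> g. \<pi> \<in> Aut E \<and> g \<in> G}))"

definition common_nbr_ind :: "('a \<Rightarrow> 'a \<Rightarrow> bool) \<Rightarrow> 'a set \<Rightarrow> ('a \<Rightarrow> 'k::field)" where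
  "common_nbr_ind E S = (\<lambda>x. if (\<forall>s\<in>S. E x s) then 1 else 0)"

end

theory Submission
  imports Defs
begin

text \<open>
  By homogeneity of the Rado graph (back and forth), a function with finite support \<open>T\<close>
  takes equal values at any two vertices outside \<open>T\<close> with the same neighbours in \<open>T\<close>.
  Automorphisms preserve the size of such a \<open>T\<close>, so an orbit-finite spanning set lies in
  the span of functions determined by adjacency types over at most \<open>n\<close> vertices, for a
  single \<open>n\<close>. Take \<open>|S| = n + 1\<close> and, for every \<open>A \<subseteq> S\<close>, a vertex \<open>z A\<close>
  whose neighbours in a large finite set are exactly the elements of \<open>A\<close>. The alternating
  sum of the values \<open>h (z A)\<close> with signs \<open>(-1) ^ card A\<close> vanishes for each such \<open>h\<close>
  (pair \<open>A\<close> with \<open>insert s A\<close> for some \<open>s \<in> S\<close> outside the support of \<open>h\<close>),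
  hence on their span, but equals \<open>(-1) ^ card S\<close> for \<open>common_nbr_ind E S\<close>.
\<close>

lemma fspan_module: "module (\<lambda>(c::'k::field) (f::'a \<Rightarrow> 'k) x. c * f x)"
  by unfold_locales (auto simp: fun_eq_iff algebra_simps)

lemma fspan_mono: "A \<subseteq> B \<Longrightarrow> fspan A \<subseteq> fspan B"
  unfolding fspan_def by (rule module.span_mono[OF fspan_module])

lemma fspan_base: "a \<in> A \<Longrightarrow> a \<in> fspan A"
  unfolding fspan_def by (rule module.span_base[OF fspan_module])

lemma fspan_minimal:
  fixes B :: "('a \<Rightarrow> 'k::field) set"
  assumes "A \<subseteq> B" "0 \<in> B" "\<And>x y. x \<in> B \<Longrightarrow> y \<in> B \<Longrightarrow> x + y \<in> B"
    "\<And>c x. x \<in> B \<Longrightarrow> (\<lambda>a. c * x a) \<in> B"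
  shows "fspan A \<subseteq> B"
  unfolding fspan_def
  by (rule module.span_minimal[OF fspan_module assms(1)], rule module.subspaceI[OF fspan_module])
    (use assms in \<open>auto simp: zero_fun_def\<close>)

section \<open>Homogeneity of the Rado graph\<close>

lemma rado_sym: "is_rado E \<Longrightarrow> E x y \<Longrightarrow> E y x"
  unfolding is_rado_def by blast

lemma rado_irrefl: "is_rado E \<Longrightarrow> \<not> E x x"
  unfolding is_rado_def by blast

lemma rado_extension:
  assumes "is_rado E" "finite U" "finite W" "U \<inter> W = {}"
  shows "\<exists>z. z \<notin> U \<and> z \<notin> W \<and> (\<forall>u\<in>U. E z u) \<and> (\<forall>w\<in>W. \<not> E z w)"
  using assms unfolding is_rado_def by blast

lemma rado_infinite:
  assumes "is_rado (E :: 'a \<Rightarrow> 'a \<Rightarrow> bool)"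
  shows "infinite (UNIV :: 'a set)"
  using rado_extension[OF assms, of UNIV "{}"] by auto

lemma Aut_bij: "\<pi> \<in> Aut E \<Longrightarrow> bij \<pi>"
  unfolding Aut_def by simp

lemma Aut_adj: "\<pi> \<in> Aut E \<Longrightarrow> E (\<pi> x) (\<pi> y) \<longleftrightarrow> E x y"
  unfolding Aut_def by blast

lemma Aut_inv_adj:
  assumes "\<pi> \<in> Aut E"
  shows "E (inv \<pi> x) y \<longleftrightarrow> E x (\<pi> y)"
proof -
  have "\<pi> (inv \<pi> x) = x"
    using Aut_bij[OF assms] by (simp add: bij_is_surj surj_f_inv_f)
  thus ?thesis using Aut_adj[OF assms, of "inv \<pi> x" y] by simp
qed

definition partial_iso :: "('a \<Rightarrow> 'a \<Rightarrow> bool) \<Rightarrow> ('a \<times> 'a) set \<Rightarrow> bool" where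
  "partial_iso E R \<longleftrightarrow>
     (\<forall>a b c d. (a, b) \<in> R \<longrightarrow> (c, d) \<in> R \<longrightarrow> (a = c \<longleftrightarrow> b = d) \<and> (E a c \<longleftrightarrow> E b d))"

lemma partial_iso_converse [simp]: "partial_iso E (converse R) = partial_iso E R"
  unfolding partial_iso_def by blast

lemma partial_iso_Id_on: "partial_iso E (Id_on T)"
  unfolding partial_iso_def by blast

lemma partial_isoD:
  "partial_iso E R \<Longrightarrow> (a, b) \<in> R \<Longrightarrow> (c, d) \<in> R \<Longrightarrow> (a = c \<longleftrightarrow> b = d) \<and> (E a c \<longleftrightarrow> E b d)"
  unfolding partial_iso_def by blast

lemma partial_iso_insert:
  assumes p: "partial_iso E R" and "x \<notin> Domain R" "y \<notin> Range R" "E x x \<longleftrightarrow> E y y"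
    and "\<And>a b. (a, b) \<in> R \<Longrightarrow> (E x a \<longleftrightarrow> E y b) \<and> (E a x \<longleftrightarrow> E b y)"
  shows "partial_iso E (insert (x, y) R)"
  unfolding partial_iso_def
proof (intro allI impI)
  fix a b c d assume "(a, b) \<in> insert (x, y) R" "(c, d) \<in> insert (x, y) R"
  thus "(a = c \<longleftrightarrow> b = d) \<and> (E a c \<longleftrightarrow> E b d)"
    using partial_isoD[OF p] assms(2-5) by auto
qed

lemma rado_partial_iso_extend_Domain:
  assumes r: "is_rado E" and p: "partial_iso E R" and f: "finite R"
  shows "\<exists>R'. partial_iso E R' \<and> finite R' \<and> R \<subseteq> R' \<and> x \<in> Domain R'"
proof (cases "x \<in> Domain R")
  case True
  thus ?thesis using p f by blast
next
  case False
  define U where "U = {b. \<exists>a. (a, b) \<in> R \<and> E x a}"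
  define W where "W = {b. \<exists>a. (a, b) \<in> R \<and> \<not> E x a}"
  have "U \<subseteq> Range R" "W \<subseteq> Range R" "finite (Range R)"
    using f by (auto simp: U_def W_def finite_Range)
  hence fin: "finite U" "finite W" using finite_subset by blast+
  have "a = a'" if "(a, b) \<in> R" "(a', b) \<in> R" for a a' b
    using partial_isoD[OF p that] by simp
  hence "U \<inter> W = {}" unfolding U_def W_def by blast
  then obtain y where y: "y \<notin> U" "y \<notin> W" "\<forall>u\<in>U. E y u" "\<forall>w\<in>W. \<not> E y w"
    using rado_extension[OF r fin] by blast
  have "y \<notin> Range R" using y unfolding U_def W_def by blast
  moreover have "(a, b) \<in> R \<Longrightarrow> (E x a \<longleftrightarrow> E y b) \<and> (E a x \<longleftrightarrow> E b y)" for a b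
    using y rado_sym[OF r] unfolding U_def W_def by blast
  ultimately have "partial_iso E (insert (x, y) R)"
    using partial_iso_insert[OF p False] rado_irrefl[OF r] by blast
  thus ?thesis using f by blast
qed

lemma rado_partial_iso_extend:
  assumes r: "is_rado E" and p: "partial_iso E R" and f: "finite R"
  shows "\<exists>R'. partial_iso E R' \<and> finite R' \<and> R \<subseteq> R' \<and> x \<in> Domain R' \<and> x \<in> Range R'"
proof -
  obtain R1 where R1: "partial_iso E R1" "finite R1" "R \<subseteq> R1" "x \<in> Domain R1"
    using rado_partial_iso_extend_Domain[OF r p f, of x] by blast
  have "partial_iso E (converse R1)" "finite (converse R1)" using R1(1,2) by simp_all
  then obtain R2 where R2: "partial_iso E R2" "finite R2" "converse R1 \<subseteq> R2" "x \<in> Domain R2"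
    using rado_partial_iso_extend_Domain[OF r, of "converse R1" x] by blast
  have "R \<subseteq> converse R2" "x \<in> Domain (converse R2)" "x \<in> Range (converse R2)"
    using R1(3,4) R2(3,4) by auto
  thus ?thesis using R2(1,2) by (intro exI[of _ "converse R2"]) simp
qed

lemma partial_iso_UN_incseq:
  assumes "incseq C" "\<And>k. partial_iso E (C k)"
  shows "partial_iso E (\<Union>k. C k)"
  unfolding partial_iso_def
proof (intro allI impI)
  fix a b c d assume "(a, b) \<in> (\<Union>k. C k)" "(c, d) \<in> (\<Union>k. C k)"
  then obtain i j where "(a, b) \<in> C i" "(c, d) \<in> C j" by blast
  moreover have "C i \<subseteq> C (max i j)" "C j \<subseteq> C (max i j)"
    using assms(1) by (simp_all add: incseq_def)
  ultimately have "(a, b) \<in> C (max i j)" "(c, d) \<in> C (max i j)" by blast+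
  thus "(a = c \<longleftrightarrow> b = d) \<and> (E a c \<longleftrightarrow> E b d)" by (rule partial_isoD[OF assms(2)])
qed

lemma rado_partial_iso_extend_total:
  assumes r: "is_rado (E :: 'a \<Rightarrow> 'a \<Rightarrow> bool)" and p: "partial_iso E R" and f: "finite R"
  shows "\<exists>L. partial_iso E L \<and> R \<subseteq> L \<and> Domain L = UNIV \<and> Range L = UNIV"
proof -
  define ext where
    "ext R x = (SOME R'. partial_iso E R' \<and> finite R' \<and> R \<subseteq> R' \<and> x \<in> Domain R' \<and> x \<in> Range R')"
    for R x
  have ext: "partial_iso E (ext R x) \<and> finite (ext R x) \<and> R \<subseteq> ext R x
      \<and> x \<in> Domain (ext R x) \<and> x \<in> Range (ext R x)" if "partial_iso E R" "finite R" for R x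
    unfolding ext_def by (rule someI_ex[OF rado_partial_iso_extend[OF r that]])
  define en :: "nat \<Rightarrow> 'a" where "en = from_nat_into UNIV"
  define C where "C = rec_nat R (\<lambda>k R. ext R (en k))"
  have C_0: "C 0 = R" and C_Suc: "C (Suc k) = ext (C k) (en k)" for k
    by (simp_all add: C_def)
  have C: "partial_iso E (C k) \<and> finite (C k)" for k
  proof (induction k)
    case 0
    show ?case using p f by (simp add: C_0)
  next
    case (Suc k)
    thus ?case using ext[of "C k" "en k"] by (simp add: C_Suc)
  qed
  have C_step: "C k \<subseteq> C (Suc k)" "en k \<in> Domain (C (Suc k))" "en k \<in> Range (C (Suc k))" for k
    using ext[of "C k" "en k"] C[of k] by (simp_all add: C_Suc)
  have "partial_iso E (\<Union>k. C k)"
    by (rule partial_iso_UN_incseq[OF incseq_SucI]) (use C_step(1) C in blast)+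
  moreover have "x \<in> Domain (\<Union>k. C k) \<and> x \<in> Range (\<Union>k. C k)" for x
  proof -
    have "countable (UNIV :: 'a set)" using r unfolding is_rado_def by blast
    then obtain k where "en k = x" unfolding en_def using from_nat_into_surj[of UNIV x] by blast
    thus ?thesis using C_step(2,3)[of k] by blast
  qed
  hence "Domain (\<Union>k. C k) = UNIV" "Range (\<Union>k. C k) = UNIV" by blast+
  moreover have "R \<subseteq> (\<Union>k. C k)" unfolding C_0[symmetric] by blast
  ultimately show ?thesis by blast
qed

lemma partial_iso_total_Aut:
  assumes p: "partial_iso E L" and dom: "Domain L = UNIV" and ran: "Range L = UNIV"
  shows "\<exists>\<pi>\<in>Aut E. \<forall>a b. (a, b) \<in> L \<longrightarrow> \<pi> a = b"
proof -
  define \<pi> where "\<pi> a = (SOME b. (a, b) \<in> L)" for a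
  have graph: "(a, \<pi> a) \<in> L" for a
    unfolding \<pi>_def by (rule someI_ex) (use dom in blast)
  have eq: "\<pi> a = b" if "(a, b) \<in> L" for a b
    using partial_isoD[OF p graph[of a] that] by simp
  have iso: "(a = c \<longleftrightarrow> \<pi> a = \<pi> c) \<and> (E a c \<longleftrightarrow> E (\<pi> a) (\<pi> c))" for a c
    by (rule partial_isoD[OF p graph graph])
  have "b \<in> range \<pi>" for b
  proof -
    obtain a where "(a, b) \<in> L" using ran by blast
    thus ?thesis using eq by blast
  qed
  hence "surj \<pi>" by blast
  moreover have "inj \<pi>" using iso by (simp add: inj_def)
  ultimately have "bij \<pi>" by (simp add: bij_def)
  hence "\<pi> \<in> Aut E" unfolding Aut_def using iso by blast
  thus ?thesis using eq by auto
qed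

lemma rado_homogeneous:
  assumes "is_rado E" "partial_iso E R" "finite R"
  shows "\<exists>\<pi>\<in>Aut E. \<forall>a b. (a, b) \<in> R \<longrightarrow> \<pi> a = b"
proof -
  obtain L where L: "partial_iso E L" "Domain L = UNIV" "Range L = UNIV" and "R \<subseteq> L"
    using rado_partial_iso_extend_total[OF assms] by blast
  obtain \<pi> where "\<pi> \<in> Aut E" "\<forall>a b. (a, b) \<in> L \<longrightarrow> \<pi> a = b"
    using partial_iso_total_Aut[OF L] by blast
  thus ?thesis using \<open>R \<subseteq> L\<close> by (intro bexI[of _ \<pi>]) auto
qed

section \<open>Functions determined by adjacency types\<close>

definition type_determined :: "('a \<Rightarrow> 'a \<Rightarrow> bool) \<Rightarrow> 'a set \<Rightarrow> ('a \<Rightarrow> 'k) \<Rightarrow> bool" where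
  "type_determined E T h \<longleftrightarrow>
     (\<forall>z z'. z \<notin> T \<longrightarrow> z' \<notin> T \<longrightarrow> (\<forall>t\<in>T. E z t \<longleftrightarrow> E z' t) \<longrightarrow> h z = h z')"

definition finitely_type_determined :: "('a \<Rightarrow> 'a \<Rightarrow> bool) \<Rightarrow> ('a \<Rightarrow> 'k) set" where
  "finitely_type_determined E = {h. \<exists>T. finite T \<and> type_determined E T h}"

definition type_determined_card_le :: "('a \<Rightarrow> 'a \<Rightarrow> bool) \<Rightarrow> nat \<Rightarrow> ('a \<Rightarrow> 'k) set" where
  "type_determined_card_le E n = {h. \<exists>T. finite T \<and> card T \<le> n \<and> type_determined E T h}"

lemma type_determinedD:
  "type_determined E T h \<Longrightarrow> z \<notin> T \<Longrightarrow> z' \<notin> T \<Longrightarrow> (\<And>t. t \<in> T \<Longrightarrow> E z t \<longleftrightarrow> E z' t) \<Longrightarrow> h z = h z'"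
  unfolding type_determined_def by blast

lemma type_determined_mono: "type_determined E T h \<Longrightarrow> T \<subseteq> T' \<Longrightarrow> type_determined E T' h"
  unfolding type_determined_def by blast

lemma type_determined_combine:
  assumes f: "type_determined E T f" and g: "type_determined E T g"
  shows "type_determined E T (\<lambda>a. F (f a) (g a))"
  unfolding type_determined_def
proof (intro allI impI)
  fix z z' assume "z \<notin> T" "z' \<notin> T" "\<forall>t\<in>T. E z t \<longleftrightarrow> E z' t"
  hence "f z = f z'" "g z = g z'" using type_determinedD[OF f] type_determinedD[OF g] by blast+
  thus "F (f z) (g z) = F (f z') (g z')" by simp
qed

lemma type_determined_act:
  assumes h: "type_determined E T h" and \<pi>: "\<pi> \<in> Aut E"
  shows "type_determined E (\<pi> ` T) (act \<pi> h)"
  unfolding type_determined_def act_def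
proof (intro allI impI)
  fix z z' assume "z \<notin> \<pi> ` T" "z' \<notin> \<pi> ` T" and same: "\<forall>t\<in>\<pi> ` T. E z t \<longleftrightarrow> E z' t"
  moreover have "\<pi> (inv \<pi> x) = x" for x
    using Aut_bij[OF \<pi>] by (simp add: bij_is_surj surj_f_inv_f)
  ultimately have "inv \<pi> z \<notin> T" "inv \<pi> z' \<notin> T"
    using imageI[of "inv \<pi> z" T \<pi>] imageI[of "inv \<pi> z'" T \<pi>] by auto
  moreover have "E (inv \<pi> z) t \<longleftrightarrow> E (inv \<pi> z') t" if "t \<in> T" for t
  proof -
    have "E (inv \<pi> z) t \<longleftrightarrow> E z (\<pi> t)" by (rule Aut_inv_adj[OF \<pi>])
    also have "\<dots> \<longleftrightarrow> E z' (\<pi> t)" using same that by blast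
    also have "\<dots> \<longleftrightarrow> E (inv \<pi> z') t" by (rule Aut_inv_adj[OF \<pi>, symmetric])
    finally show ?thesis .
  qed
  ultimately show "h (inv \<pi> z) = h (inv \<pi> z')" by (rule type_determinedD[OF h])
qed

lemma fspan_finitely_type_determined:
  "fspan (finitely_type_determined E) = (finitely_type_determined E :: ('a \<Rightarrow> 'k::field) set)"
proof
  show "fspan (finitely_type_determined E) \<subseteq> (finitely_type_determined E :: ('a \<Rightarrow> 'k) set)"
  proof (rule fspan_minimal)
    show "0 \<in> finitely_type_determined E"
      unfolding finitely_type_determined_def type_determined_def by auto
    fix f g :: "'a \<Rightarrow> 'k" and c
    assume "f \<in> finitely_type_determined E" "g \<in> finitely_type_determined E"
    then obtain T U where "finite T" "type_determined E T f" "finite U" "type_determined E U g"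
      unfolding finitely_type_determined_def by blast
    hence TU: "finite (T \<union> U)" "type_determined E (T \<union> U) f" "type_determined E (T \<union> U) g"
      using type_determined_mono[of E _ _ "T \<union> U"] by auto
    have "type_determined E (T \<union> U) (\<lambda>a. f a + g a)" "type_determined E (T \<union> U) (\<lambda>a. c * f a)"
      using type_determined_combine[OF TU(2,3), of "(+)"] type_determined_combine[OF TU(2,2), of "\<lambda>x _. c * x"]
      by simp_all
    thus "f + g \<in> finitely_type_determined E" "(\<lambda>a. c * f a) \<in> finitely_type_determined E"
      using TU(1) unfolding finitely_type_determined_def plus_fun_def by blast+
  qed simp
qed (rule subsetI, rule fspan_base)

lemma fin_supp_finitely_type_determined:
  assumes r: "is_rado E" and "fin_supp E f"
  shows "f \<in> finitely_type_determined E"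
proof -
  obtain T where T: "finite T" and fixes_f: "\<And>\<pi>. \<pi> \<in> Aut E \<Longrightarrow> \<forall>t\<in>T. \<pi> t = t \<Longrightarrow> act \<pi> f = f"
    using assms(2) unfolding fin_supp_def by blast
  have "type_determined E T f"
    unfolding type_determined_def
  proof (intro allI impI)
    fix z z' assume z: "z \<notin> T" "z' \<notin> T" and same: "\<forall>t\<in>T. E z t \<longleftrightarrow> E z' t"
    have "partial_iso E (insert (z', z) (Id_on T))"
      by (rule partial_iso_insert[OF partial_iso_Id_on])
        (use z same rado_irrefl[OF r] rado_sym[OF r] in auto)
    moreover have "finite (insert (z', z) (Id_on T))" using T by (simp add: Id_on_def)
    ultimately obtain \<pi> where \<pi>: "\<pi> \<in> Aut E" "\<forall>a b. (a, b) \<in> insert (z', z) (Id_on T) \<longrightarrow> \<pi> a = b"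
      using rado_homogeneous[OF r] by blast
    have "\<pi> t = t" if "t \<in> T" for t using \<pi>(2) Id_onI[OF that] by blast
    hence "act \<pi> f = f" using fixes_f[OF \<pi>(1)] by blast
    have "\<pi> z' = z" using \<pi>(2) by blast
    hence "inv \<pi> z = z'" using Aut_bij[OF \<pi>(1)] by (metis bij_is_inj inv_f_f)
    have "f z = act \<pi> f z" using \<open>act \<pi> f = f\<close> by simp
    also have "\<dots> = f z'" using \<open>inv \<pi> z = z'\<close> by (simp add: act_def)
    finally show "f z = f z'" .
  qed
  thus ?thesis using T unfolding finitely_type_determined_def by blast
qed

lemma fin_supp_common_nbr_ind:
  assumes "finite S"
  shows "fin_supp E (common_nbr_ind E S)"
  unfolding fin_supp_def
proof (intro exI[of _ S] conjI ballI impI)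
  fix \<pi> assume \<pi>: "\<pi> \<in> Aut E" and fixes_S: "\<forall>s\<in>S. \<pi> s = s"
  have "E (inv \<pi> a) s \<longleftrightarrow> E a s" if "s \<in> S" for a s
    using Aut_inv_adj[OF \<pi>, of a s] fixes_S that by simp
  thus "act \<pi> (common_nbr_ind E S) = common_nbr_ind E S"
    unfolding act_def common_nbr_ind_def by (simp cong: ball_cong)
qed (rule assms)

lemma orbit_finitely_spanned_type_determined_card_le:
  assumes "orbit_finitely_spanned E V" and V: "V \<subseteq> finitely_type_determined E"
  shows "\<exists>n. V \<subseteq> fspan (type_determined_card_le E n)"
proof -
  obtain X G where X: "X \<subseteq> V" "fspan X = V" and G: "finite G" "G \<subseteq> X"
    and orbits: "X = {act \<pi> g | \<pi> g. \<pi> \<in> Aut E \<and> g \<in> G}"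
    using assms(1) unfolding orbit_finitely_spanned_def by (elim exE conjE) blast
  have "\<forall>g\<in>G. \<exists>T. finite T \<and> type_determined E T g"
    using G(2) X(1) V unfolding finitely_type_determined_def by blast
  then obtain T where T: "\<And>g. g \<in> G \<Longrightarrow> finite (T g) \<and> type_determined E (T g) g"
    by metis
  define n where "n = (\<Sum>g\<in>G. card (T g))"
  have "X \<subseteq> type_determined_card_le E n"
  proof
    fix x assume "x \<in> X"
    then obtain \<pi> g where \<pi>: "\<pi> \<in> Aut E" and g: "g \<in> G" and x: "x = act \<pi> g"
      using orbits by blast
    have "card (\<pi> ` T g) \<le> card (T g)" using T[OF g] by (simp add: card_image_le)
    also have "\<dots> \<le> n" unfolding n_def by (rule member_le_sum[OF g _ G(1)]) simp
    finally have "card (\<pi> ` T g) \<le> n" .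
    moreover have "type_determined E (\<pi> ` T g) x"
      unfolding x using type_determined_act[OF _ \<pi>] T[OF g] by blast
    ultimately show "x \<in> type_determined_card_le E n"
      using T[OF g] unfolding type_determined_card_le_def by blast
  qed
  hence "V \<subseteq> fspan (type_determined_card_le E n)" using X(2) fspan_mono by blast
  thus ?thesis ..
qed

section \<open>Alternating sums over realizers of subsets\<close>

lemma sum_Pow_alternating_eq_0:
  fixes F :: "'a set \<Rightarrow> 'k::comm_ring_1"
  assumes "finite S" "s \<in> S" "\<And>A. A \<subseteq> S - {s} \<Longrightarrow> F (insert s A) = F A"
  shows "(\<Sum>A\<in>Pow S. (-1) ^ card A * F A) = 0"
proof -
  define S' where "S' = S - {s}"
  have S: "S = insert s S'" "s \<notin> S'" "finite S'" using assms S'_def by auto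
  have inj: "inj_on (insert s) (Pow S')"
    using S(2) unfolding inj_on_def by (metis PowD insert_ident subsetD)
  have "(\<Sum>A\<in>Pow S. (-1) ^ card A * F A) =
     (\<Sum>A\<in>Pow S'. (-1) ^ card A * F A) + (\<Sum>A\<in>insert s ` Pow S'. (-1) ^ card A * F A)"
    unfolding S(1) Pow_insert by (rule sum.union_disjoint) (use S in auto)
  also have "(\<Sum>A\<in>insert s ` Pow S'. (-1) ^ card A * F A)
      = (\<Sum>A\<in>Pow S'. (-1) ^ card (insert s A) * F (insert s A))"
    by (rule sum.reindex[OF inj, unfolded comp_def])
  also have "\<dots> = (\<Sum>A\<in>Pow S'. - ((-1) ^ card A * F A))"
  proof (rule sum.cong)
    fix A assume A: "A \<in> Pow S'"
    hence "finite A" "s \<notin> A" using S finite_subset by auto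
    thus "(-1) ^ card (insert s A) * F (insert s A) = - ((-1) ^ card A * F A)"
      using assms(3)[of A] A S'_def by simp
  qed simp
  finally show ?thesis by (simp add: sum_negf)
qed

definition realizes_subsets :: "('a \<Rightarrow> 'a \<Rightarrow> bool) \<Rightarrow> 'a set \<Rightarrow> 'a set \<Rightarrow> ('a set \<Rightarrow> 'a) \<Rightarrow> bool" where
  "realizes_subsets E S U z \<longleftrightarrow> (\<forall>A\<subseteq>S. z A \<notin> U \<and> (\<forall>u\<in>U. E (z A) u \<longleftrightarrow> u \<in> A))"

definition alt_sum :: "'a set \<Rightarrow> ('a set \<Rightarrow> 'a) \<Rightarrow> ('a \<Rightarrow> 'k::comm_ring_1) \<Rightarrow> 'k" where
  "alt_sum S z h = (\<Sum>A\<in>Pow S. (-1) ^ card A * h (z A))"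

text \<open>The finite set \<open>U\<close> must be allowed to grow: an element of a span combines functions
  determined by types over different sets.\<close>

definition alt_sums_eventually_vanish :: "('a \<Rightarrow> 'a \<Rightarrow> bool) \<Rightarrow> 'a set \<Rightarrow> ('a \<Rightarrow> 'k::comm_ring_1) set" where
  "alt_sums_eventually_vanish E S =
     {h. \<exists>U. finite U \<and> (\<forall>z. realizes_subsets E S U z \<longrightarrow> alt_sum S z h = 0)}"

lemma realizes_subsets_antimono:
  "realizes_subsets E S U z \<Longrightarrow> U' \<subseteq> U \<Longrightarrow> realizes_subsets E S U' z"
  unfolding realizes_subsets_def by blast

lemma rado_realizes_subsets_exists:
  assumes r: "is_rado E" and U: "finite U"
  shows "\<exists>z. realizes_subsets E S U z"
proof -
  have "\<forall>A. \<exists>y. y \<notin> U \<and> (\<forall>u\<in>U. E y u \<longleftrightarrow> u \<in> A)"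
  proof
    fix A
    obtain y where "y \<notin> U \<inter> A" "y \<notin> U - A" "\<forall>u\<in>U \<inter> A. E y u" "\<forall>w\<in>U - A. \<not> E y w"
      using rado_extension[OF r, of "U \<inter> A" "U - A"] U by auto
    thus "\<exists>y. y \<notin> U \<and> (\<forall>u\<in>U. E y u \<longleftrightarrow> u \<in> A)" by blast
  qed
  hence "\<exists>z. \<forall>A. z A \<notin> U \<and> (\<forall>u\<in>U. E (z A) u \<longleftrightarrow> u \<in> A)" by (rule choice)
  thus ?thesis unfolding realizes_subsets_def by blast
qed

lemma alt_sum_add: "alt_sum S z (f + g) = alt_sum S z f + alt_sum S z g"
  unfolding alt_sum_def by (simp add: sum.distrib algebra_simps)

lemma alt_sum_scale: "alt_sum S z (\<lambda>a. c * f a) = c * alt_sum S z f"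
  unfolding alt_sum_def by (simp add: sum_distrib_left algebra_simps)

lemma alt_sum_type_determined:
  assumes S: "finite S" and T: "finite T" "card T < card S" "T \<subseteq> U"
    and h: "type_determined E T h" and z: "realizes_subsets E S U z"
  shows "alt_sum S z h = 0"
proof -
  have "\<not> S \<subseteq> T"
  proof
    assume "S \<subseteq> T"
    thus False using card_mono[OF T(1), of S] T(2) by simp
  qed
  then obtain s where s: "s \<in> S" "s \<notin> T" by blast
  have zT: "z B \<notin> T \<and> (\<forall>t\<in>T. E (z B) t \<longleftrightarrow> t \<in> B)" if "B \<subseteq> S" for B
    using z T(3) that unfolding realizes_subsets_def by blast
  show ?thesis unfolding alt_sum_def
  proof (rule sum_Pow_alternating_eq_0[OF S s(1)])
    fix A assume "A \<subseteq> S - {s}"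
    hence "A \<subseteq> S" "insert s A \<subseteq> S" using s by auto
    from zT[OF this(2)] zT[OF this(1)] show "h (z (insert s A)) = h (z A)"
      using s(2) by (intro type_determinedD[OF h]) auto
  qed
qed

lemma alt_sum_common_nbr_ind:
  assumes S: "finite S" "S \<subseteq> U" and z: "realizes_subsets E S U z"
  shows "alt_sum S z (common_nbr_ind E S) = ((-1) ^ card S :: 'k::field)"
proof -
  have indicator: "common_nbr_ind E S (z A) = (if A = S then 1 else (0 :: 'k))" if "A \<subseteq> S" for A
  proof -
    have "(\<forall>s\<in>S. E (z A) s) \<longleftrightarrow> S \<subseteq> A"
      using z S(2) that unfolding realizes_subsets_def by blast
    thus ?thesis unfolding common_nbr_ind_def using that by auto
  qed
  have "alt_sum S z (common_nbr_ind E S) = (\<Sum>A\<in>Pow S. if A = S then (-1) ^ card A else 0 :: 'k)"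
    unfolding alt_sum_def
  proof (rule sum.cong)
    fix A assume "A \<in> Pow S"
    thus "(-1) ^ card A * common_nbr_ind E S (z A) = (if A = S then (-1) ^ card A else 0 :: 'k)"
      using indicator[of A] by simp
  qed simp
  also have "\<dots> = (-1) ^ card S" using S(1) by (simp add: sum.delta')
  finally show ?thesis .
qed

lemma fspan_type_determined_card_le_alt_sums_eventually_vanish:
  assumes S: "finite S" "n < card S"
  shows "fspan (type_determined_card_le E n)
    \<subseteq> (alt_sums_eventually_vanish E S :: ('a \<Rightarrow> 'k::field) set)"
proof (rule fspan_minimal)
  show "type_determined_card_le E n \<subseteq> (alt_sums_eventually_vanish E S :: ('a \<Rightarrow> 'k) set)"
  proof
    fix h :: "'a \<Rightarrow> 'k" assume "h \<in> type_determined_card_le E n"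
    then obtain T where T: "finite T" "card T < card S" "type_determined E T h"
      unfolding type_determined_card_le_def using S(2) by fastforce
    show "h \<in> alt_sums_eventually_vanish E S"
      unfolding alt_sums_eventually_vanish_def
      using alt_sum_type_determined[OF S(1) T(1,2) order_refl T(3)] T(1) by blast
  qed
  show "0 \<in> (alt_sums_eventually_vanish E S :: ('a \<Rightarrow> 'k) set)"
    unfolding alt_sums_eventually_vanish_def alt_sum_def by auto
next
  fix f g :: "'a \<Rightarrow> 'k" and c
  assume "f \<in> alt_sums_eventually_vanish E S" "g \<in> alt_sums_eventually_vanish E S"
  then obtain U V where U: "finite U" "\<And>z. realizes_subsets E S U z \<Longrightarrow> alt_sum S z f = 0"
    and V: "finite V" "\<And>z. realizes_subsets E S V z \<Longrightarrow> alt_sum S z g = 0"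
    unfolding alt_sums_eventually_vanish_def by blast
  have "alt_sum S z (f + g) = 0" "alt_sum S z (\<lambda>a. c * f a) = 0"
    if "realizes_subsets E S (U \<union> V) z" for z
    using U(2) V(2) realizes_subsets_antimono[OF that]
    by (simp_all add: alt_sum_add alt_sum_scale)
  thus "f + g \<in> alt_sums_eventually_vanish E S" "(\<lambda>a. c * f a) \<in> alt_sums_eventually_vanish E S"
    unfolding alt_sums_eventually_vanish_def using U(1) V(1) by blast+
qed

lemma rado_common_nbr_ind_notin_fspan:
  assumes r: "is_rado E" and S: "finite S" "n < card S"
  shows "(common_nbr_ind E S :: 'a \<Rightarrow> 'k::field) \<notin> fspan (type_determined_card_le E n)"
proof
  assume "(common_nbr_ind E S :: 'a \<Rightarrow> 'k) \<in> fspan (type_determined_card_le E n)"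
  then obtain U where U: "finite U"
    and vanish: "\<And>z. realizes_subsets E S U z \<Longrightarrow> alt_sum S z (common_nbr_ind E S :: 'a \<Rightarrow> 'k) = 0"
    using fspan_type_determined_card_le_alt_sums_eventually_vanish[OF S]
    unfolding alt_sums_eventually_vanish_def by blast
  obtain z where z: "realizes_subsets E S (S \<union> U) z"
    using rado_realizes_subsets_exists[OF r, of "S \<union> U" S] S(1) U by blast
  have "alt_sum S z (common_nbr_ind E S :: 'a \<Rightarrow> 'k) = 0"
    by (rule vanish[OF realizes_subsets_antimono[OF z Un_upper2]])
  moreover have "alt_sum S z (common_nbr_ind E S :: 'a \<Rightarrow> 'k) = (-1) ^ card S"
    by (rule alt_sum_common_nbr_ind[OF S(1) Un_upper1 z])
  ultimately show False by simp
qed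

lemma rado_not_orbit_finitely_spanned:
  assumes r: "is_rado E" and V: "V \<subseteq> finitely_type_determined E"
    and common_nbr_ind: "\<And>S. finite S \<Longrightarrow> common_nbr_ind E S \<in> V"
  shows "\<not> orbit_finitely_spanned E (V :: ('a \<Rightarrow> 'k::field) set)"
proof
  assume "orbit_finitely_spanned E V"
  then obtain n where n: "V \<subseteq> fspan (type_determined_card_le E n)"
    using orbit_finitely_spanned_type_determined_card_le[OF _ V] by blast
  obtain S :: "'a set" where S: "finite S" "card S = Suc n"
    using infinite_arbitrarily_large[OF rado_infinite[OF r], of "Suc n"] by blast
  hence "(common_nbr_ind E S :: 'a \<Rightarrow> 'k) \<in> fspan (type_determined_card_le E n)"
    using common_nbr_ind n by blast
  moreover have "n < card S" using S(2) by simp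
  ultimately show False using rado_common_nbr_ind_notin_fspan[OF r S(1), where 'k = 'k] by blast
qed

theorem mainTheorem18:
  fixes E :: "'a \<Rightarrow> 'a \<Rightarrow> bool"
  assumes "is_rado E"
  shows "\<not> orbit_finitely_spanned E
            (fspan {common_nbr_ind E S :: 'a \<Rightarrow> 'k::field | S. finite S})
       \<and> \<not> orbit_finitely_spanned E {f :: 'a \<Rightarrow> 'k. fin_supp E f}"
proof
  have "common_nbr_ind E S \<in> (finitely_type_determined E :: ('a \<Rightarrow> 'k) set)" if "finite S" for S
    by (rule fin_supp_finitely_type_determined[OF assms fin_supp_common_nbr_ind[OF that]])
  hence "{common_nbr_ind E S :: 'a \<Rightarrow> 'k | S. finite S} \<subseteq> finitely_type_determined E" by blast
  hence "fspan {common_nbr_ind E S :: 'a \<Rightarrow> 'k | S. finite S} \<subseteq> finitely_type_determined E"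
    using fspan_mono fspan_finitely_type_determined by blast
  moreover have "common_nbr_ind E S \<in> fspan {common_nbr_ind E S :: 'a \<Rightarrow> 'k | S. finite S}"
    if "finite S" for S
    using that by (blast intro: fspan_base)
  ultimately show "\<not> orbit_finitely_spanned E (fspan {common_nbr_ind E S :: 'a \<Rightarrow> 'k | S. finite S})"
    by (rule rado_not_orbit_finitely_spanned[OF assms])
  have "{f :: 'a \<Rightarrow> 'k. fin_supp E f} \<subseteq> finitely_type_determined E"
    using fin_supp_finitely_type_determined[OF assms] by blast
  thus "\<not> orbit_finitely_spanned E {f :: 'a \<Rightarrow> 'k. fin_supp E f}"
    by (rule rado_not_orbit_finitely_spanned[OF assms]) (simp add: fin_supp_common_nbr_ind)
qed

end
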